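(* Suppose $\dim_{\mathbb{C}}N=n-m=4$, where $N=\mathrm{span}_{\mathbb{C}}\{I_{m+1},\dots,I_n\}$, and suppose that (1) $a_{m+1}=b_{m+1}=0$, and (2) $a_{m+2}=b_{m+2}=0$ or $a_{m+3}=b_{m+3}=0$. Then for every circle $C$ as described in the context, $\lambda:=\int_C\zeta^{-1}\,d\zeta=2\pi i$ (that is, $2\pi i$ times the unit of $\mathbb{A}_n^m$).
   Context: Fix natural numbers $m\le n$. $\mathbb{A}_n^m$ is a commutative associative algebra with unit over $\mathbb{C}$ with a basis $\{I_k\}_{k=1}^n$ satisfying: (1) for $r,s\in\{1,\dots,m\}$, $I_rI_s=0$ if $r\ne s$ and $I_rI_r=I_r$; (2) for $r,s\in\{m+1,\dots,n\}$, $I_rI_s=\sum_{k=\max\{r,s\}+1}^{n}\Upsilon^{s}_{r,k}I_k$ with constants $\Upsilon^s_{r,k}\in\mathbb{C}$; (3) for each $s\in\{m+1,\dots,n\}$ there is a unique $u_s\in\{1,\dots,m\}$ such that for $r\in\{1,\dots,m\}$, $I_rI_s=I_s$ if $r=u_s$ and $0$ otherwise. Unit $1=\sum_{u=1}^mI_u$; $\mathbb{A}_n^m=S\oplus_sN$ with $S=\mathrm{span}\{I_1,\dots,I_m\}$, $N=\mathrm{span}\{I_{m+1},\dots,I_n\}$. $f_u(\sum_k\lambda_kI_k)=\lambda_u$. Let $e_1=1$, $e_2=\sum_{k=1}^na_kI_k$, $e_3=\sum_{k=1}^nb_kI_k$ ($a_k,b_k\in\mathbb{C}$) be linearly independent over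 $\mathbb{R}$; $\zeta=xe_1+ye_2+ze_3$ ($x,y,z\in\mathbb{R}$), $E_3$ their real span. Standing assumption: $f_u(E_3)=\mathbb{C}$ for all $u=1,\dots,m$. $\zeta$ is non-invertible exactly when $(x,y,z)$ lies on one of the lines $L_u=\{x+y\,\mathrm{Re}\,a_u+z\,\mathrm{Re}\,b_u=0,\ y\,\mathrm{Im}\,a_u+z\,\mathrm{Im}\,b_u=0\}$. The circle: $C\subset E_3$ is $C=\{xe_1+ye_2+ze_3:(x,y,z)\in C'\}$ for a Euclidean circle $C'\subset\mathbb{R}^3$ of radius $R>0$ centered at the origin, such that for every $u$ the image $f_u(C)$ is a positively oriented closed Jordan curve in $\mathbb{C}$ bounding a domain containing $0$. Integral: for a Jordan rectifiable curve $\gamma$ and continuous $\Psi=\sum_k(U_k+iV_k)I_k$ on $\gamma_\zeta$, $\int_{\gamma_\zeta}\Psi d\zeta:=\sum_kI_k\int_\gamma(U_k+iV_k)dx+\sum_ke_2I_k\int_\gamma(U_k+iV_k)dy+\sum_ke_3I_k\int_\gamma(U_k+iV_k)dz$. *)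

theory Defs
  imports "HOL-Complex_Analysis.Complex_Analysis"
begin

text \<open>Elements of the algebra A_n^m are coefficient vectors x :: nat => complex,
  x k being the coefficient of the basis element I_k, supported on {1..n}.\<close>

definition A_elem :: "nat \<Rightarrow> (nat \<Rightarrow> complex) \<Rightarrow> bool" where
  "A_elem n x \<longleftrightarrow> (\<forall>k. k \<notin> {1..n} \<longrightarrow> x k = 0)"

definition elt :: "nat \<Rightarrow> (nat \<Rightarrow> complex) \<Rightarrow> nat \<Rightarrow> complex" where
  "elt n a = (\<lambda>k. if k \<in> {1..n} then a k else 0)"

text \<open>Product of basis elements I_r I_s (as coefficient vector, evaluated at k).
  Ups r s k stands for the constant Upsilon^s_{r,k}; u s stands for u_s.\<close>

definition bprod :: "nat \<Rightarrow> nat \<Rightarrow> (nat \<Rightarrow> nat \<Rightarrow> nat \<Rightarrow> complex) \<Rightarrow> (nat \<Rightarrow> nat)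
    \<Rightarrow> nat \<Rightarrow> nat \<Rightarrow> nat \<Rightarrow> complex" where
  "bprod m n Ups u r s k =
     (if r \<le> m \<and> s \<le> m then (if r = s \<and> k = r then 1 else 0)
      else if r \<le> m then (if r = u s \<and> k = s then 1 else 0)
      else if s \<le> m then (if s = u r \<and> k = r then 1 else 0)
      else if max r s < k \<and> k \<le> n then Ups r s k else 0)"

definition alg_mul :: "nat \<Rightarrow> nat \<Rightarrow> (nat \<Rightarrow> nat \<Rightarrow> nat \<Rightarrow> complex) \<Rightarrow> (nat \<Rightarrow> nat)
    \<Rightarrow> (nat \<Rightarrow> complex) \<Rightarrow> (nat \<Rightarrow> complex) \<Rightarrow> nat \<Rightarrow> complex" where
  "alg_mul m n Ups u x y =
     (\<lambda>k. \<Sum>r\<in>{1..n}. \<Sum>s\<in>{1..n}. x r * y s * bprod m n Ups u r s k)"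

definition is_Anm :: "nat \<Rightarrow> nat \<Rightarrow> (nat \<Rightarrow> nat \<Rightarrow> nat \<Rightarrow> complex) \<Rightarrow> (nat \<Rightarrow> nat) \<Rightarrow> bool" where
  "is_Anm m n Ups u \<longleftrightarrow>
     1 \<le> m \<and> m \<le> n \<and>
     (\<forall>s\<in>{m+1..n}. u s \<in> {1..m}) \<and>
     (\<forall>x y. A_elem n x \<longrightarrow> A_elem n y \<longrightarrow> alg_mul m n Ups u x y = alg_mul m n Ups u y x) \<and>
     (\<forall>x y z. A_elem n x \<longrightarrow> A_elem n y \<longrightarrow> A_elem n z \<longrightarrow>
        alg_mul m n Ups u (alg_mul m n Ups u x y) z = alg_mul m n Ups u x (alg_mul m n Ups u y z))"

definition A_one :: "nat \<Rightarrow> nat \<Rightarrow> complex" where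
  "A_one m = (\<lambda>k. if 1 \<le> k \<and> k \<le> m then 1 else 0)"

definition A_inv :: "nat \<Rightarrow> nat \<Rightarrow> (nat \<Rightarrow> nat \<Rightarrow> nat \<Rightarrow> complex) \<Rightarrow> (nat \<Rightarrow> nat)
    \<Rightarrow> (nat \<Rightarrow> complex) \<Rightarrow> nat \<Rightarrow> complex" where
  "A_inv m n Ups u x = (THE w. A_elem n w \<and> alg_mul m n Ups u x w = A_one m)"

text \<open>zeta = x e_1 + y e_2 + z e_3 with e_1 = 1, e_2 = sum a_k I_k, e_3 = sum b_k I_k.\<close>

definition zeta :: "nat \<Rightarrow> nat \<Rightarrow> (nat \<Rightarrow> complex) \<Rightarrow> (nat \<Rightarrow> complex)
    \<Rightarrow> real \<Rightarrow> real \<Rightarrow> real \<Rightarrow> nat \<Rightarrow> complex" where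
  "zeta m n a b x y z =
     (\<lambda>k. of_real x * A_one m k + of_real y * elt n a k + of_real z * elt n b k)"

definition zeta3 :: "nat \<Rightarrow> nat \<Rightarrow> (nat \<Rightarrow> complex) \<Rightarrow> (nat \<Rightarrow> complex)
    \<Rightarrow> real^3 \<Rightarrow> nat \<Rightarrow> complex" where
  "zeta3 m n a b P = zeta m n a b (P $ 1) (P $ 2) (P $ 3)"

text \<open>Standing assumptions: e_1, e_2, e_3 linearly independent over R, and f_u(E_3) = C.\<close>

definition standing_assms :: "nat \<Rightarrow> nat \<Rightarrow> (nat \<Rightarrow> complex) \<Rightarrow> (nat \<Rightarrow> complex) \<Rightarrow> bool" where
  "standing_assms m n a b \<longleftrightarrow>
     (\<forall>x y z. zeta m n a b x y z = (\<lambda>_. 0) \<longrightarrow> x = 0 \<and> y = 0 \<and> z = 0) \<and>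
     (\<forall>v\<in>{1..m}. \<forall>w::complex. \<exists>x y z::real.
        zeta m n a b x y z v = w)"

text \<open>The integral of Psi (a function on R^3 with values in A_n^m) along a path gamma
  in R^3 parametrized on [0,1], as defined in the paper:
  sum_k I_k int (Psi_k) dx + e_2 sum_k I_k int (Psi_k) dy + e_3 sum_k I_k int (Psi_k) dz.\<close>

definition coord_int :: "nat \<Rightarrow> (real \<Rightarrow> real^3) \<Rightarrow> (real^3 \<Rightarrow> nat \<Rightarrow> complex) \<Rightarrow> 3
    \<Rightarrow> nat \<Rightarrow> complex" where
  "coord_int n \<gamma> \<Psi> i = (\<lambda>k. if k \<in> {1..n} then
      integral {0..1} (\<lambda>t. \<Psi> (\<gamma> t) k * of_real (vector_derivative (\<lambda>s. \<gamma> s $ i) (at t)))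
      else 0)"

definition alg_line_integral :: "nat \<Rightarrow> nat \<Rightarrow> (nat \<Rightarrow> nat \<Rightarrow> nat \<Rightarrow> complex) \<Rightarrow> (nat \<Rightarrow> nat)
    \<Rightarrow> (nat \<Rightarrow> complex) \<Rightarrow> (nat \<Rightarrow> complex) \<Rightarrow> (real \<Rightarrow> real^3) \<Rightarrow> (real^3 \<Rightarrow> nat \<Rightarrow> complex)
    \<Rightarrow> nat \<Rightarrow> complex" where
  "alg_line_integral m n Ups u a b \<gamma> \<Psi> =
     (\<lambda>k. coord_int n \<gamma> \<Psi> 1 k
          + alg_mul m n Ups u (elt n a) (coord_int n \<gamma> \<Psi> 2) k
          + alg_mul m n Ups u (elt n b) (coord_int n \<gamma> \<Psi> 3) k)"

text \<open>Circle C' of radius R centred at the origin of R^3, spanned by orthonormal p, q,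
  parametrized on [0,1] (the orientation is encoded by the order of p and q).\<close>

definition circ :: "real \<Rightarrow> real^3 \<Rightarrow> real^3 \<Rightarrow> real \<Rightarrow> real^3" where
  "circ R p q t = R *\<^sub>R (cos (2 * pi * t) *\<^sub>R p + sin (2 * pi * t) *\<^sub>R q)"

text \<open>The admissibility condition on the circle: for every u, f_u(C) is a positively
  oriented closed Jordan curve bounding a domain containing 0.\<close>

definition admissible_circle :: "nat \<Rightarrow> nat \<Rightarrow> (nat \<Rightarrow> complex) \<Rightarrow> (nat \<Rightarrow> complex)
    \<Rightarrow> real \<Rightarrow> real^3 \<Rightarrow> real^3 \<Rightarrow> bool" where
  "admissible_circle m n a b R p q \<longleftrightarrow>
     R > 0 \<and> norm p = 1 \<and> norm q = 1 \<and> inner p q = 0 \<and>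
     (\<forall>v\<in>{1..m}. let g = (\<lambda>t. zeta3 m n a b (circ R p q t) v) in
        simple_path g \<and> pathfinish g = pathstart g \<and>
        0 \<in> inside (path_image g) \<and> winding_number g 0 = 1)"

end

(*
  Write zeta = s (1 + y), where s is the semisimple part of zeta (its coordinates at I_1, ..., I_m,
  invertible along C because 0 lies inside every f_u(C)) and y = s^-1 (zeta - s) lies in the
  radical N.  N is nilpotent, so 1 + y is inverted by a finite Neumann series and
  log (1 + y) = sum_j (-1)^j y^(j+1) / (j+1) is a polynomial in the coordinates of zeta, hence a
  closed curve in the algebra.  Differentiating along C gives
    zeta^-1 zeta' = s^-1 s' + (log (1 + y))',
  so the radical part integrates to 0, while the coordinate u of s^-1 s' is f_u(zeta)' / f_u(zeta),
  whose integral is 2 pi i times the winding number of f_u(C) around 0.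
*)

theory Submission
  imports Defs "HOL-Algebra.Ring"
begin

section \<open>The algebra as a commutative ring\<close>

lemma sum_sum_restrict:
  fixes f :: "'a \<Rightarrow> 'a \<Rightarrow> 'b::comm_monoid_add"
  assumes "finite A" "B \<subseteq> A"
  shows "(\<Sum>r\<in>A. \<Sum>s\<in>A. if r \<in> B \<and> s \<in> B then f r s else 0) = (\<Sum>r\<in>B. \<Sum>s\<in>B. f r s)"
proof -
  have "(\<Sum>r\<in>A. \<Sum>s\<in>A. if r \<in> B \<and> s \<in> B then f r s else 0)
      = (\<Sum>r\<in>A. if r \<in> B then \<Sum>s\<in>A. if s \<in> B then f r s else 0 else 0)"
    by (intro sum.cong) auto
  then show ?thesis
    using assms by (simp add: sum.inter_restrict[symmetric] Int_absorb1)
qed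

lemma alg_mul_apply_S:
  assumes "k \<in> {1..m}" "m \<le> n"
  shows "alg_mul m n Ups u x y k = x k * y k"
proof -
  have "x r * y s * bprod m n Ups u r s k = (if r = k then x r else 0) * (if s = k then y s else 0)" for r s
    using assms by (auto simp: bprod_def)
  then show ?thesis
    using assms by (simp add: alg_mul_def sum_product[symmetric] sum.delta')
qed

lemma alg_mul_apply_N:
  assumes "m < k" "k \<le> n" "u k \<in> {1..m}"
  shows "alg_mul m n Ups u x y k = x (u k) * y k + x k * y (u k)
     + (\<Sum>r\<in>{m<..<k}. \<Sum>s\<in>{m<..<k}. x r * y s * Ups r s k)"
proof -
  let ?A = "{m<..<k}"
  have "x r * y s * bprod m n Ups u r s k
      = (if r = u k then x r else 0) * (if s = k then y s else 0)
      + (if r = k then x r else 0) * (if s = u k then y s else 0)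
      + (if r \<in> ?A \<and> s \<in> ?A then x r * y s * Ups r s k else 0)" for r s
    using assms by (auto simp: bprod_def)
  moreover have "?A \<subseteq> {1..n}" using assms by auto
  ultimately show ?thesis
    using assms by (simp add: alg_mul_def sum.distrib sum_product[symmetric] sum.delta' sum_sum_restrict
        del: greaterThanLessThan_iff)
qed

lemma alg_mul_apply_outside:
  assumes "k \<notin> {1..n}"
  shows "alg_mul m n Ups u x y k = 0"
  unfolding alg_mul_def by (intro sum.neutral ballI) (use assms in \<open>auto simp: bprod_def\<close>)

lemma alg_mul_one_left:
  assumes "is_Anm m n Ups u" "A_elem n x"
  shows "alg_mul m n Ups u (A_one m) x = x"
proof
  fix k
  have "m \<le> n" and u: "\<And>k. m < k \<Longrightarrow> k \<le> n \<Longrightarrow> u k \<in> {1..m}"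
    using assms(1) by (auto simp: is_Anm_def)
  then consider "k \<in> {1..m}" | "m < k" "k \<le> n" | "k \<notin> {1..n}" by fastforce
  then show "alg_mul m n Ups u (A_one m) x k = x k"
  proof cases
    case 1 with \<open>m \<le> n\<close> show ?thesis by (simp add: alg_mul_apply_S A_one_def)
  next
    case 2 with u[OF 2] show ?thesis by (simp add: alg_mul_apply_N A_one_def)
  next
    case 3 with assms(2) show ?thesis by (simp add: alg_mul_apply_outside A_elem_def)
  qed
qed

definition Anm_ring :: "nat \<Rightarrow> nat \<Rightarrow> (nat \<Rightarrow> nat \<Rightarrow> nat \<Rightarrow> complex) \<Rightarrow> (nat \<Rightarrow> nat)
    \<Rightarrow> (nat \<Rightarrow> complex) ring" where
  "Anm_ring m n Ups u = \<lparr>carrier = {x. A_elem n x}, mult = alg_mul m n Ups u, one = A_one m,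
     zero = (\<lambda>_. 0), add = (\<lambda>x y k. x k + y k)\<rparr>"

lemma cring_Anm_ring:
  assumes "is_Anm m n Ups u"
  shows "cring (Anm_ring m n Ups u)"
proof (rule cringI)
  show "abelian_group (Anm_ring m n Ups u)"
  proof (rule abelian_groupI)
    fix x assume "x \<in> carrier (Anm_ring m n Ups u)"
    then show "\<exists>y \<in> carrier (Anm_ring m n Ups u). y \<oplus>\<^bsub>Anm_ring m n Ups u\<^esub> x = \<zero>\<^bsub>Anm_ring m n Ups u\<^esub>"
      by (intro bexI[of _ "\<lambda>k. - x k"]) (auto simp: Anm_ring_def A_elem_def)
  qed (auto simp: Anm_ring_def A_elem_def)
  show "comm_monoid (Anm_ring m n Ups u)"
  proof (rule comm_monoidI)
    fix x y z
    assume "x \<in> carrier (Anm_ring m n Ups u)" "y \<in> carrier (Anm_ring m n Ups u)"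
      "z \<in> carrier (Anm_ring m n Ups u)"
    then have "A_elem n x" "A_elem n y" "A_elem n z" by (simp_all add: Anm_ring_def)
    with assms show "x \<otimes>\<^bsub>Anm_ring m n Ups u\<^esub> y = y \<otimes>\<^bsub>Anm_ring m n Ups u\<^esub> x"
      and "(x \<otimes>\<^bsub>Anm_ring m n Ups u\<^esub> y) \<otimes>\<^bsub>Anm_ring m n Ups u\<^esub> z
        = x \<otimes>\<^bsub>Anm_ring m n Ups u\<^esub> (y \<otimes>\<^bsub>Anm_ring m n Ups u\<^esub> z)"
      and "\<one>\<^bsub>Anm_ring m n Ups u\<^esub> \<otimes>\<^bsub>Anm_ring m n Ups u\<^esub> x = x"
      by (simp_all add: Anm_ring_def is_Anm_def alg_mul_one_left)
  qed (use assms in \<open>auto simp: Anm_ring_def is_Anm_def A_elem_def A_one_def alg_mul_apply_outside\<close>)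
qed (simp add: Anm_ring_def alg_mul_def algebra_simps sum.distrib)

definition has_coord_derivative :: "(real \<Rightarrow> 'a \<Rightarrow> complex) \<Rightarrow> ('a \<Rightarrow> complex) \<Rightarrow> real filter \<Rightarrow> bool"
    (infix "has'_coord'_derivative" 50) where
  "(F has_coord_derivative F') net \<longleftrightarrow> (\<forall>k. ((\<lambda>t. F t k) has_vector_derivative F' k) net)"

definition circ_velocity :: "real \<Rightarrow> real^3 \<Rightarrow> real^3 \<Rightarrow> real \<Rightarrow> real^3" where
  "circ_velocity R p q t = (2 * pi * R) *\<^sub>R (cos (2 * pi * t) *\<^sub>R q - sin (2 * pi * t) *\<^sub>R p)"

lemma circ_coord_has_real_derivative:
  "((\<lambda>s. circ R p q s $ i) has_real_derivative circ_velocity R p q t $ i) (at t within S)"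
  unfolding circ_def circ_velocity_def by (auto intro!: derivative_eq_intros simp: algebra_simps)

lemma vector_derivative_circ_coord:
  "vector_derivative (\<lambda>s. circ R p q s $ i) (at t) = circ_velocity R p q t $ i"
  using circ_coord_has_real_derivative[of R p q i t UNIV]
  by (simp add: vector_derivative_at has_real_derivative_iff_has_vector_derivative)

lemma zeta3_has_coord_derivative:
  fixes \<gamma> :: "real \<Rightarrow> real^3"
  assumes "\<And>i. ((\<lambda>s. \<gamma> s $ i) has_real_derivative \<gamma>' $ i) (at t within S)"
  shows "((\<lambda>s. zeta3 m n a b (\<gamma> s)) has_coord_derivative zeta3 m n a b \<gamma>') (at t within S)"
  unfolding has_coord_derivative_def zeta3_def zeta_def
  by (intro allI has_vector_derivative_add has_vector_derivative_mult_left has_vector_derivative_of_real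
      assms)

lemma admissible_circle_nonzero:
  assumes "admissible_circle m n a b R p q" "v \<in> {1..m}" "t \<in> {0..1}"
  shows "zeta3 m n a b (circ R p q t) v \<noteq> 0"
proof -
  let ?g = "\<lambda>t. zeta3 m n a b (circ R p q t) v"
  have "0 \<in> inside (path_image ?g)"
    using assms(1,2) by (simp add: admissible_circle_def Let_def)
  then have "0 \<notin> path_image ?g"
    using inside_no_overlap by blast
  with assms(3) show ?thesis
    by (auto simp: path_image_def)
qed

lemma admissible_circle_winding:
  assumes adm: "admissible_circle m n a b R p q" and v: "v \<in> {1..m}"
  shows "((\<lambda>t. zeta3 m n a b (circ_velocity R p q t) v / zeta3 m n a b (circ R p q t) v)
    has_integral 2 * pi * \<i>) {0..1}"
proof -
  let ?g = "\<lambda>t. zeta3 m n a b (circ R p q t) v" and ?g' = "\<lambda>t. zeta3 m n a b (circ_velocity R p q t) v"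
  have deriv: "(?g has_vector_derivative ?g' t) (at t within S)" for t S
    using zeta3_has_coord_derivative[OF circ_coord_has_real_derivative]
    by (simp add: has_coord_derivative_def)
  have "continuous_on {0..1} ?g'"
    by (auto simp: zeta3_def zeta_def circ_velocity_def intro!: continuous_intros)
  with deriv have "?g C1_differentiable_on {0..1}"
    unfolding C1_differentiable_on_def by (intro exI[of _ ?g']) auto
  then have "valid_path ?g"
    unfolding valid_path_def by (rule C1_differentiable_imp_piecewise)
  moreover have "0 \<notin> path_image ?g"
    using admissible_circle_nonzero[OF adm v] by (auto simp: path_image_def)
  ultimately have "((\<lambda>w. 1 / (w - 0)) has_contour_integral 2 * pi * \<i> * winding_number ?g 0) ?g"
    by (rule has_contour_integral_winding_number)
  moreover have "winding_number ?g 0 = 1"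
    using adm v by (simp add: admissible_circle_def Let_def)
  ultimately have "((\<lambda>t. 1 / ?g t * vector_derivative ?g (at t within {0..1})) has_integral 2 * pi * \<i>)
      {0..1}"
    by (simp add: has_contour_integral_def)
  then show ?thesis
  proof (rule has_integral_cong[THEN iffD1, rotated])
    fix t :: real assume "t \<in> {0..1}"
    then show "1 / ?g t * vector_derivative ?g (at t within {0..1}) = ?g' t / ?g t"
      by (simp add: vector_derivative_at_within_ivl[OF deriv])
  qed
qed

locale Anm_algebra = cring R for R :: "(nat \<Rightarrow> complex) ring" (structure) +
  fixes m n :: nat and Ups :: "nat \<Rightarrow> nat \<Rightarrow> nat \<Rightarrow> complex" and u :: "nat \<Rightarrow> nat"
  assumes R_eq: "R = Anm_ring m n Ups u" and Anm: "is_Anm m n Ups u"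
begin

lemma m_le_n: "m \<le> n"
  using Anm by (simp add: is_Anm_def)

lemma u_range: "m < k \<Longrightarrow> k \<le> n \<Longrightarrow> u k \<in> {1..m}"
  using Anm by (simp add: is_Anm_def)

lemma carrier_iff: "x \<in> carrier R \<longleftrightarrow> (\<forall>k. k \<notin> {1..n} \<longrightarrow> x k = 0)"
  by (simp add: R_eq Anm_ring_def A_elem_def)

lemma mult_eq: "x \<otimes> y = alg_mul m n Ups u x y"
  by (simp add: R_eq Anm_ring_def)

lemma one_eq: "\<one> = A_one m"
  by (simp add: R_eq Anm_ring_def)

lemma zero_eq: "\<zero> = (\<lambda>_. 0)"
  by (simp add: R_eq Anm_ring_def)

lemma add_eq: "x \<oplus> y = (\<lambda>k. x k + y k)"
  by (simp add: R_eq Anm_ring_def)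

lemma a_inv_apply: "x \<in> carrier R \<Longrightarrow> (\<ominus> x) k = - x k"
proof -
  assume x: "x \<in> carrier R"
  then have "(\<lambda>k. - x k) \<in> carrier R" by (simp add: carrier_iff)
  moreover have "(\<lambda>k. - x k) \<oplus> x = \<zero>" by (simp add: add_eq zero_eq)
  ultimately show ?thesis using x by (simp add: minus_equality)
qed

lemma minus_apply: "x \<in> carrier R \<Longrightarrow> y \<in> carrier R \<Longrightarrow> (x \<ominus> y) k = x k - y k"
  by (simp add: a_minus_def add_eq a_inv_apply)

lemma mult_apply_S: "k \<in> {1..m} \<Longrightarrow> (x \<otimes> y) k = x k * y k"
  by (simp add: mult_eq alg_mul_apply_S m_le_n)

lemma mult_apply_N: "m < k \<Longrightarrow> k \<le> n \<Longrightarrow> (x \<otimes> y) k = x (u k) * y k + x k * y (u k)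
     + (\<Sum>r\<in>{m<..<k}. \<Sum>s\<in>{m<..<k}. x r * y s * Ups r s k)"
  unfolding mult_eq by (intro alg_mul_apply_N u_range)

lemma mult_apply_outside: "k \<notin> {1..n} \<Longrightarrow> (x \<otimes> y) k = 0"
  by (simp add: mult_eq alg_mul_apply_outside)

lemma mult_of_S_elements:
  assumes "\<And>k. m < k \<Longrightarrow> x k = 0" "\<And>k. m < k \<Longrightarrow> y k = 0"
  shows "x \<otimes> y = (\<lambda>k. if k \<in> {1..m} then x k * y k else 0)"
proof
  fix k
  consider "k \<in> {1..m}" | "m < k" "k \<le> n" | "k \<notin> {1..n}" using m_le_n by fastforce
  then show "(x \<otimes> y) k = (if k \<in> {1..m} then x k * y k else 0)"
    by cases (use assms u_range m_le_n in \<open>auto simp: mult_apply_S mult_apply_N mult_apply_outside\<close>)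
qed

lemma mult_scale_left: "(\<lambda>k. c * x k) \<otimes> y = (\<lambda>k. c * (x \<otimes> y) k)"
  by (simp add: mult_eq alg_mul_def sum_distrib_left algebra_simps)

lemma mult_scale_right: "x \<otimes> (\<lambda>k. y k * c) = (\<lambda>k. (x \<otimes> y) k * c)"
  by (simp add: mult_eq alg_mul_def sum_distrib_left algebra_simps)

lemma mult_add_right: "x \<otimes> (\<lambda>k. y k + z k) = (\<lambda>k. (x \<otimes> y) k + (x \<otimes> z) k)"
  by (simp add: mult_eq alg_mul_def sum.distrib algebra_simps)

lemma mult_sum_right: "x \<otimes> (\<lambda>k. \<Sum>j\<in>J. c j * f j k) = (\<lambda>k. \<Sum>j\<in>J. c j * (x \<otimes> f j) k)"
  by (simp add: mult_eq alg_mul_def sum_distrib_left algebra_simps sum.swap[of _ J])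

section \<open>Inverses via the nilpotent radical\<close>

definition S_part :: "(nat \<Rightarrow> complex) \<Rightarrow> nat \<Rightarrow> complex" where
  "S_part x = (\<lambda>k. if k \<in> {1..m} then x k else 0)"

definition S_inverse :: "(nat \<Rightarrow> complex) \<Rightarrow> nat \<Rightarrow> complex" where
  "S_inverse x = (\<lambda>k. if k \<in> {1..m} then 1 / x k else 0)"

definition radical :: "(nat \<Rightarrow> complex) set" where
  "radical = {y \<in> carrier R. \<forall>k\<in>{1..m}. y k = 0}"

lemma S_part_closed [simp]: "S_part x \<in> carrier R"
  and S_inverse_closed [simp]: "S_inverse x \<in> carrier R"
  using m_le_n by (auto simp: carrier_iff S_part_def S_inverse_def)

lemma S_part_mult_S_inverse:
  assumes "\<And>k. k \<in> {1..m} \<Longrightarrow> x k \<noteq> 0"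
  shows "S_part x \<otimes> S_inverse x = \<one>"
  using assms by (subst mult_of_S_elements) (auto simp: S_part_def S_inverse_def one_eq A_one_def)

lemma radical_closed: "y \<in> radical \<Longrightarrow> y \<in> carrier R"
  by (simp add: radical_def)

lemma mult_radical:
  assumes "z \<in> carrier R" "y \<in> radical"
  shows "z \<otimes> y \<in> radical"
  using assms by (auto simp: radical_def mult_apply_S)

lemma minus_S_part_radical:
  assumes "x \<in> carrier R"
  shows "x \<ominus> S_part x \<in> radical"
proof -
  have "(x \<ominus> S_part x) k = x k - S_part x k" for k
    using assms by (simp add: minus_apply)
  moreover have "x \<ominus> S_part x \<in> carrier R"
    using assms by simp
  ultimately show ?thesis by (simp add: radical_def S_part_def)
qed

text \<open>Each factor from the radical raises the lowest index of a possibly nonzero coordinate,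
  since products of basis elements of N only involve basis elements of strictly larger index.\<close>

lemma mult_radical_vanishing:
  assumes y: "y \<in> radical" and z: "\<And>k. k \<le> m + i \<Longrightarrow> z k = 0" and k: "k \<le> m + Suc i"
  shows "(z \<otimes> y) k = 0"
proof -
  consider "k \<in> {1..m}" | "m < k" "k \<le> n" | "k \<notin> {1..n}" using m_le_n by fastforce
  then show ?thesis
  proof cases
    case 2
    have "z (u k) = 0" "y (u k) = 0"
      using u_range[OF 2] y z by (auto simp: radical_def)
    moreover have "z r = 0" if "r \<in> {m<..<k}" for r
      using that k z by auto
    ultimately show ?thesis using 2 by (simp add: mult_apply_N)
  qed (use z in \<open>auto simp: mult_apply_S mult_apply_outside\<close>)
qed

lemma radical_pow_vanishing:
  assumes "y \<in> radical" "k \<le> m + j"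
  shows "(y [^] Suc j) k = 0"
  using assms(2)
proof (induction j arbitrary: k)
  case 0
  then show ?case
    using assms(1) by (cases "k = 0") (auto simp: radical_def carrier_iff)
next
  case (Suc j)
  then show ?case
    using assms(1) by (subst nat_pow_Suc) (intro mult_radical_vanishing)
qed

lemma radical_nilpotent:
  assumes "y \<in> radical"
  shows "y [^] Suc (n - m) = \<zero>"
proof
  fix k
  show "(y [^] Suc (n - m)) k = \<zero> k"
  proof (cases "k \<le> n")
    case True
    then show ?thesis using radical_pow_vanishing[OF assms, of k "n - m"] m_le_n by (simp add: zero_eq)
  next
    case False
    have "y [^] Suc (n - m) \<in> carrier R" using assms by (simp add: radical_closed)
    with False show ?thesis by (simp add: carrier_iff zero_eq)
  qed
qed

definition neumann_series :: "(nat \<Rightarrow> complex) \<Rightarrow> nat \<Rightarrow> complex" where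
  "neumann_series y = (\<lambda>k. \<Sum>j<Suc (n - m). (-1) ^ j * (y [^] j) k)"

lemma neumann_series_closed [simp]: "y \<in> carrier R \<Longrightarrow> neumann_series y \<in> carrier R"
  using nat_pow_closed by (simp add: neumann_series_def carrier_iff)

lemma one_plus_mult_neumann_series:
  assumes y: "y \<in> radical"
  shows "(\<one> \<oplus> y) \<otimes> neumann_series y = \<one>"
proof -
  have yc: "y \<in> carrier R" using y by (rule radical_closed)
  have pow_step: "(\<one> \<oplus> y) \<otimes> y [^] j = y [^] j \<oplus> y [^] Suc j" for j
    using yc nat_pow_closed[OF yc, of j] by (simp only: nat_pow_Suc) algebra
  define f where "f k j = - ((-1) ^ j * (y [^] j) k)" for k j
  have "((\<one> \<oplus> y) \<otimes> y [^] j) k = (y [^] j) k + (y [^] Suc j) k" for j k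
    using pow_step by (simp add: add_eq)
  then have "((\<one> \<oplus> y) \<otimes> neumann_series y) k
      = (\<Sum>j<Suc (n - m). (-1) ^ j * ((y [^] j) k + (y [^] Suc j) k))" for k
    unfolding neumann_series_def mult_sum_right by simp
  also have "\<dots> k = (\<Sum>j<Suc (n - m). f k (Suc j) - f k j)" for k
    by (simp add: f_def algebra_simps)
  also have "\<dots> k = \<one> k" for k
    by (simp only: sum_lessThan_telescope) (use radical_nilpotent[OF y] in \<open>simp add: f_def zero_eq\<close>)
  finally show ?thesis by auto
qed

lemma A_inv_eqI:
  assumes "x \<in> carrier R" "w \<in> carrier R" "x \<otimes> w = \<one>"
  shows "A_inv m n Ups u x = w"
  unfolding A_inv_def
proof (rule the_equality)
  show "A_elem n w \<and> alg_mul m n Ups u x w = A_one m"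
    using assms by (simp add: R_eq Anm_ring_def)
next
  fix w' assume "A_elem n w' \<and> alg_mul m n Ups u x w' = A_one m"
  then have w': "w' \<in> carrier R" "x \<otimes> w' = \<one>" by (simp_all add: R_eq Anm_ring_def)
  have "w' = w' \<otimes> (x \<otimes> w)" using assms w' by simp
  also have "\<dots> = (x \<otimes> w') \<otimes> w" using assms(1,2) w'(1) by algebra
  finally show "w' = w" using assms w' by simp
qed

text \<open>With \<open>s = S_part x\<close> one has \<open>x = s \<otimes> (\<one> \<oplus> nil_factor x)\<close>, the factorization \<open>\<zeta> = s (1 + y)\<close>.\<close>

definition nil_factor :: "(nat \<Rightarrow> complex) \<Rightarrow> nat \<Rightarrow> complex" where
  "nil_factor x = S_inverse x \<otimes> (x \<ominus> S_part x)"

lemma nil_factor_radical: "x \<in> carrier R \<Longrightarrow> nil_factor x \<in> radical"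
  unfolding nil_factor_def by (intro mult_radical S_inverse_closed minus_S_part_radical)

lemma A_inv_eq:
  assumes x: "x \<in> carrier R" and nz: "\<And>k. k \<in> {1..m} \<Longrightarrow> x k \<noteq> 0"
  shows "A_inv m n Ups u x = S_inverse x \<otimes> neumann_series (nil_factor x)"
proof (rule A_inv_eqI)
  let ?s = "S_part x" and ?\<sigma> = "S_inverse x" and ?P = "neumann_series (nil_factor x)"
  have P: "?P \<in> carrier R" using x by (simp add: nil_factor_def)
  have "x \<otimes> (?\<sigma> \<otimes> ?P) = (?s \<otimes> ?\<sigma>) \<otimes> ?P \<oplus> nil_factor x \<otimes> ?P"
    using x P S_part_closed[of x] S_inverse_closed[of x] unfolding nil_factor_def by algebra
  also have "\<dots> = (\<one> \<oplus> nil_factor x) \<otimes> ?P"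
  proof -
    have one: "S_part x \<otimes> S_inverse x = \<one>" by (rule S_part_mult_S_inverse[OF nz])
    show ?thesis unfolding one using x P nil_factor_radical[OF x] by (simp add: l_distr radical_closed)
  qed
  also have "\<dots> = \<one>"
    using x by (simp add: one_plus_mult_neumann_series nil_factor_radical)
  finally show "x \<otimes> (?\<sigma> \<otimes> ?P) = \<one>" .
qed (use x in \<open>simp_all add: nil_factor_def\<close>)

text \<open>The derivative of \<open>nil_factor\<close> at \<open>x\<close> in direction \<open>x'\<close>, by the product rule and
  \<open>(s\<^sup>-\<^sup>1)' = - s\<^sup>-\<^sup>2 s'\<close>.\<close>

definition nil_factor_deriv :: "(nat \<Rightarrow> complex) \<Rightarrow> (nat \<Rightarrow> complex) \<Rightarrow> nat \<Rightarrow> complex" where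
  "nil_factor_deriv x x' = \<ominus> (S_inverse x \<otimes> S_inverse x \<otimes> S_part x') \<otimes> (x \<ominus> S_part x)
     \<oplus> S_inverse x \<otimes> (x' \<ominus> S_part x')"

lemma A_inv_mult_eq:
  assumes x: "x \<in> carrier R" and x': "x' \<in> carrier R" and nz: "\<And>k. k \<in> {1..m} \<Longrightarrow> x k \<noteq> 0"
  shows "A_inv m n Ups u x \<otimes> x'
    = S_inverse x \<otimes> S_part x' \<oplus> neumann_series (nil_factor x) \<otimes> nil_factor_deriv x x'"
proof -
  define P where "P = neumann_series (nil_factor x)"
  have P: "P \<in> carrier R" using x by (simp add: P_def nil_factor_def)
  note closed = x x' P S_part_closed[of x] S_inverse_closed[of x] S_part_closed[of x']
  have "S_inverse x \<otimes> S_part x' \<oplus> P \<otimes> nil_factor_deriv x x'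
      = S_inverse x \<otimes> S_part x' \<otimes> (\<one> \<ominus> (\<one> \<oplus> nil_factor x) \<otimes> P) \<oplus> (S_inverse x \<otimes> P) \<otimes> x'"
    using closed unfolding nil_factor_deriv_def nil_factor_def by algebra
  also have "\<dots> = A_inv m n Ups u x \<otimes> x'"
    using closed A_inv_eq[OF x nz]
    by (simp add: P_def one_plus_mult_neumann_series nil_factor_radical a_minus_def r_neg)
  finally show ?thesis by (simp add: P_def)
qed

section \<open>Logarithmic derivatives\<close>

lemma has_coord_derivative_mult:
  assumes F: "(F has_coord_derivative F') (at t within S)" and G: "(G has_coord_derivative G') (at t within S)"
  shows "((\<lambda>s. F s \<otimes> G s) has_coord_derivative F' \<otimes> G t \<oplus> F t \<otimes> G') (at t within S)"
  unfolding has_coord_derivative_def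
proof
  fix k
  have "((\<lambda>s. alg_mul m n Ups u (F s) (G s) k) has_vector_derivative
      (\<Sum>r\<in>{1..n}. \<Sum>q\<in>{1..n}. (F t r * G' q + F' r * G t q) * bprod m n Ups u r q k)) (at t within S)"
    unfolding alg_mul_def using F G unfolding has_coord_derivative_def
    by (intro has_vector_derivative_sum has_vector_derivative_mult_left has_vector_derivative_mult) auto
  then show "((\<lambda>s. (F s \<otimes> G s) k) has_vector_derivative (F' \<otimes> G t \<oplus> F t \<otimes> G') k) (at t within S)"
    by (simp add: mult_eq add_eq alg_mul_def distrib_right sum.distrib add.commute)
qed

lemma S_inverse_has_coord_derivative:
  assumes X: "(X has_coord_derivative X') (at t within S)" and nz: "\<And>k. k \<in> {1..m} \<Longrightarrow> X t k \<noteq> 0"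
  shows "((\<lambda>s. S_inverse (X s)) has_coord_derivative
      \<ominus> (S_inverse (X t) \<otimes> S_inverse (X t) \<otimes> S_part X')) (at t within S)"
  unfolding has_coord_derivative_def
proof
  fix k
  have "S_inverse (X t) \<otimes> S_inverse (X t) \<otimes> S_part X' \<in> carrier R"
    by simp
  then have coord: "(\<ominus> (S_inverse (X t) \<otimes> S_inverse (X t) \<otimes> S_part X')) k
      = (if k \<in> {1..m} then X' k * - (inverse (X t k) ^ 2) else 0)"
    by (simp add: a_inv_apply mult_of_S_elements S_inverse_def S_part_def power2_eq_square divide_inverse)
  show "((\<lambda>s. S_inverse (X s) k) has_vector_derivative
      (\<ominus> (S_inverse (X t) \<otimes> S_inverse (X t) \<otimes> S_part X')) k) (at t within S)"
  proof (cases "k \<in> {1..m}")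
    case True
    have "((\<lambda>s. inverse (X s k)) has_vector_derivative X' k * - (inverse (X t k) ^ 2)) (at t within S)"
      using field_vector_diff_chain_within[OF X[unfolded has_coord_derivative_def, rule_format, of k]
          DERIV_inverse[OF nz[OF True]]]
      by (simp add: o_def power2_eq_square)
    with True show ?thesis unfolding coord by (simp add: S_inverse_def divide_inverse)
  next
    case False
    then have "(\<lambda>s. S_inverse (X s) k) = (\<lambda>s. 0)" by (auto simp: S_inverse_def)
    with False show ?thesis unfolding coord by auto
  qed
qed

lemma nil_factor_has_coord_derivative:
  assumes X: "\<And>s. X s \<in> carrier R" "X' \<in> carrier R" "(X has_coord_derivative X') (at t within S)"
    and nz: "\<And>k. k \<in> {1..m} \<Longrightarrow> X t k \<noteq> 0"
  shows "((\<lambda>s. nil_factor (X s)) has_coord_derivative nil_factor_deriv (X t) X') (at t within S)"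
proof -
  have "((\<lambda>s. X s \<ominus> S_part (X s)) has_coord_derivative X' \<ominus> S_part X') (at t within S)"
    unfolding has_coord_derivative_def
  proof
    fix k
    show "((\<lambda>s. (X s \<ominus> S_part (X s)) k) has_vector_derivative (X' \<ominus> S_part X') k) (at t within S)"
      using X unfolding minus_apply[OF X(1) S_part_closed] minus_apply[OF X(2) S_part_closed]
      by (cases "k \<in> {1..m}") (auto simp: has_coord_derivative_def S_part_def)
  qed
  with S_inverse_has_coord_derivative[OF X(3) nz] show ?thesis
    unfolding nil_factor_def nil_factor_deriv_def by (rule has_coord_derivative_mult)
qed

lemma has_coord_derivative_pow:
  assumes Y: "\<And>s. Y s \<in> carrier R" "Y' \<in> carrier R" "(Y has_coord_derivative Y') (at t within S)"
  shows "((\<lambda>s. Y s [^] Suc j) has_coord_derivative (\<lambda>k. of_nat (Suc j) * (Y t [^] j \<otimes> Y') k))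
    (at t within S)"
proof (induction j)
  case 0
  show ?case using Y by simp
next
  case (Suc j)
  have pow: "(\<lambda>s. Y s [^] Suc (Suc j)) = (\<lambda>s. Y s [^] Suc j \<otimes> Y s)"
    by (rule ext) (rule nat_pow_Suc)
  have "(Y t [^] j \<otimes> Y') \<otimes> Y t = Y t [^] Suc j \<otimes> Y'"
    using Y nat_pow_closed[OF Y(1), of t j] by (simp only: nat_pow_Suc) algebra
  then have "(\<lambda>k. of_nat (Suc j) * (Y t [^] j \<otimes> Y') k) \<otimes> Y t \<oplus> Y t [^] Suc j \<otimes> Y'
      = (\<lambda>k. of_nat (Suc (Suc j)) * (Y t [^] Suc j \<otimes> Y') k)"
    by (simp only: mult_scale_left) (simp add: add_eq algebra_simps)
  with has_coord_derivative_mult[OF Suc.IH Y(3)] show ?case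
    unfolding pow by simp
qed

text \<open>\<open>log (1 + y)\<close>, a polynomial because \<open>y\<close> is nilpotent.\<close>

definition log_series :: "(nat \<Rightarrow> complex) \<Rightarrow> nat \<Rightarrow> complex" where
  "log_series y = (\<lambda>k. \<Sum>j<Suc (n - m). (-1) ^ j / of_nat (Suc j) * (y [^] Suc j) k)"

lemma log_series_has_coord_derivative:
  assumes Y: "\<And>s. Y s \<in> carrier R" "Y' \<in> carrier R" "(Y has_coord_derivative Y') (at t within S)"
  shows "((\<lambda>s. log_series (Y s)) has_coord_derivative neumann_series (Y t) \<otimes> Y') (at t within S)"
  unfolding has_coord_derivative_def
proof
  fix k
  have "((\<lambda>s. log_series (Y s) k) has_vector_derivative
      (\<Sum>j<Suc (n - m). (-1) ^ j / of_nat (Suc j) * (of_nat (Suc j) * (Y t [^] j \<otimes> Y') k)))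
      (at t within S)"
    unfolding log_series_def using has_coord_derivative_pow[OF Y, unfolded has_coord_derivative_def]
    by (intro has_vector_derivative_sum has_vector_derivative_mult_right) auto
  also have "(\<Sum>j<Suc (n - m). (-1) ^ j / of_nat (Suc j) * (of_nat (Suc j) * (Y t [^] j \<otimes> Y') k))
      = (\<Sum>j<Suc (n - m). (-1) ^ j * (Y' \<otimes> Y t [^] j) k)"
    by (intro sum.cong refl) (simp add: m_comm[OF Y(2) nat_pow_closed[OF Y(1)]] del: of_nat_Suc)
  also have "\<dots> = (Y' \<otimes> neumann_series (Y t)) k"
    unfolding neumann_series_def mult_sum_right by simp
  also have "\<dots> = (neumann_series (Y t) \<otimes> Y') k"
    by (metis m_comm neumann_series_closed Y(1,2))
  finally show "((\<lambda>s. log_series (Y s) k) has_vector_derivative (neumann_series (Y t) \<otimes> Y') k)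
      (at t within S)" .
qed

lemma A_inv_mult_derivative_has_integral:
  assumes X: "\<And>t. X t \<in> carrier R" "\<And>t. X' t \<in> carrier R"
    and deriv: "\<And>t. t \<in> {0..1} \<Longrightarrow> (X has_coord_derivative X' t) (at t within {0..1})"
    and closed: "X 1 = X 0"
    and nz: "\<And>t k. t \<in> {0..1} \<Longrightarrow> k \<in> {1..m} \<Longrightarrow> X t k \<noteq> 0"
    and winding: "\<And>k. k \<in> {1..m} \<Longrightarrow> ((\<lambda>t. X' t k / X t k) has_integral 2 * pi * \<i>) {0..1}"
  shows "((\<lambda>t. (A_inv m n Ups u (X t) \<otimes> X' t) k) has_integral 2 * pi * \<i> * \<one> k) {0..1}"
proof -
  let ?Y = "\<lambda>t. nil_factor (X t)" and ?Y' = "\<lambda>t. nil_factor_deriv (X t) (X' t)"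
  have Y: "?Y t \<in> carrier R" "?Y' t \<in> carrier R" for t
    using X by (simp_all add: nil_factor_def nil_factor_deriv_def)
  have "((\<lambda>t. log_series (?Y t) k) has_vector_derivative (neumann_series (?Y t) \<otimes> ?Y' t) k)
      (at t within {0..1})" if "t \<in> {0..1}" for t
    using log_series_has_coord_derivative[OF Y(1) Y(2)
        nil_factor_has_coord_derivative[OF X(1) X(2) deriv[OF that] nz[OF that]]]
    by (simp add: has_coord_derivative_def)
  then have log: "((\<lambda>t. (neumann_series (?Y t) \<otimes> ?Y' t) k) has_integral 0) {0..1}"
    using fundamental_theorem_of_calculus[of 0 1] closed by fastforce
  have S: "((\<lambda>t. (S_inverse (X t) \<otimes> S_part (X' t)) k) has_integral 2 * pi * \<i> * \<one> k) {0..1}"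
  proof (cases "k \<in> {1..m}")
    case True
    then show ?thesis
      using winding[OF True] by (simp add: mult_apply_S S_inverse_def S_part_def one_eq A_one_def)
  next
    case False
    then show ?thesis by (auto simp: mult_of_S_elements S_inverse_def S_part_def one_eq A_one_def)
  qed
  show ?thesis
  proof (rule has_integral_cong[THEN iffD1, OF _ has_integral_add[OF S log, unfolded add_0_right]])
    fix t :: real assume "t \<in> {0..1}"
    then have "A_inv m n Ups u (X t) \<otimes> X' t
        = S_inverse (X t) \<otimes> S_part (X' t) \<oplus> neumann_series (?Y t) \<otimes> ?Y' t"
      using A_inv_mult_eq[OF X(1) X(2) nz] by blast
    then show "(S_inverse (X t) \<otimes> S_part (X' t)) k + (neumann_series (?Y t) \<otimes> ?Y' t) k
        = (A_inv m n Ups u (X t) \<otimes> X' t) k"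
      by (simp only: add_eq)
  qed
qed

section \<open>The line integral over the circle\<close>

lemma continuous_on_mult_coord:
  assumes "\<And>k. continuous_on S (\<lambda>t. F t k)" "\<And>k. continuous_on S (\<lambda>t. G t k)"
  shows "continuous_on S (\<lambda>t. (F t \<otimes> G t) k)"
  unfolding mult_eq alg_mul_def by (intro continuous_intros assms)

lemma continuous_on_pow_coord:
  assumes "\<And>k. continuous_on S (\<lambda>t. F t k)"
  shows "continuous_on S (\<lambda>t. (F t [^] (j::nat)) k)"
proof (induction j arbitrary: k)
  case (Suc j)
  show ?case unfolding nat_pow_Suc by (intro continuous_on_mult_coord Suc.IH assms)
qed simp

lemma continuous_on_A_inv:
  assumes X: "\<And>t. X t \<in> carrier R" "\<And>k. continuous_on S (\<lambda>t. X t k)"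
    and nz: "\<And>t k. t \<in> S \<Longrightarrow> k \<in> {1..m} \<Longrightarrow> X t k \<noteq> 0"
  shows "continuous_on S (\<lambda>t. A_inv m n Ups u (X t) k)"
proof -
  have inv: "continuous_on S (\<lambda>t. S_inverse (X t) k)" for k
    using nz[of _ k] by (cases "k \<in> {1..m}") (auto simp: S_inverse_def intro!: continuous_intros X)
  have "continuous_on S (\<lambda>t. (X t \<ominus> S_part (X t)) k)" for k
    unfolding minus_apply[OF X(1) S_part_closed] unfolding S_part_def
    by (cases "k \<in> {1..m}") (auto intro!: continuous_intros X)
  then have "continuous_on S (\<lambda>t. nil_factor (X t) k)" for k
    unfolding nil_factor_def by (intro continuous_on_mult_coord inv)
  then have "continuous_on S (\<lambda>t. neumann_series (nil_factor (X t)) k)" for k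
    unfolding neumann_series_def by (intro continuous_intros continuous_on_pow_coord)
  then have "continuous_on S (\<lambda>t. (S_inverse (X t) \<otimes> neumann_series (nil_factor (X t))) k)"
    by (intro continuous_on_mult_coord inv)
  then show ?thesis
  proof (rule continuous_on_eq)
    fix t assume "t \<in> S"
    then show "(S_inverse (X t) \<otimes> neumann_series (nil_factor (X t))) k = A_inv m n Ups u (X t) k"
      using A_inv_eq[OF X(1) nz[OF \<open>t \<in> S\<close>]] by simp
  qed
qed

lemma mult_has_integral:
  assumes "\<And>s. s \<in> {1..n} \<Longrightarrow> ((\<lambda>t. F t s) has_integral I s) S"
  shows "((\<lambda>t. (c \<otimes> F t) k) has_integral (c \<otimes> I) k) S"
  unfolding mult_eq alg_mul_def
  by (intro has_integral_sum finite_atLeastAtMost has_integral_mult_left has_integral_mult_right assms)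

lemma elt_closed [simp]: "elt n a \<in> carrier R"
  by (simp add: carrier_iff elt_def)

lemma zeta3_eq: "zeta3 m n a b (v :: real^3) = (\<lambda>k. \<one> k * of_real (v $ 1) + elt n a k * of_real (v $ 2)
    + elt n b k * of_real (v $ 3))"
  by (simp add: zeta3_def zeta_def one_eq mult.commute)

lemma zeta3_closed [simp]: "zeta3 m n a b v \<in> carrier R"
  using m_le_n by (simp add: carrier_iff zeta3_eq one_eq A_one_def elt_def)

lemma alg_line_integral_has_integral:
  fixes \<gamma> \<gamma>' :: "real \<Rightarrow> real^3"
  assumes W: "\<And>t. t \<in> {0..1} \<Longrightarrow> \<Psi> (\<gamma> t) \<in> carrier R"
    and vd: "\<And>t i. vector_derivative (\<lambda>s. \<gamma> s $ i) (at t) = \<gamma>' t $ i"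
    and int: "\<And>k i. (\<lambda>t. \<Psi> (\<gamma> t) k * of_real (\<gamma>' t $ i)) integrable_on {0..1}"
  shows "((\<lambda>t. (\<Psi> (\<gamma> t) \<otimes> zeta3 m n a b (\<gamma>' t)) k) has_integral
    alg_line_integral m n Ups u a b \<gamma> \<Psi> k) {0..1}"
proof -
  let ?C = "coord_int n \<gamma> \<Psi>" and ?D = "\<lambda>i t. of_real (\<gamma>' t $ i) :: complex"
  have C: "((\<lambda>t. \<Psi> (\<gamma> t) s * ?D i t) has_integral ?C i s) {0..1}" if "s \<in> {1..n}" for i s
    using that int by (simp add: coord_int_def vd has_integral_integral)
  have C1: "((\<lambda>t. \<Psi> (\<gamma> t) k * ?D 1 t) has_integral ?C 1 k) {0..1}"
  proof (cases "k \<in> {1..n}")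
    case False
    then have "\<Psi> (\<gamma> t) k * ?D 1 t = 0" if "t \<in> {0..1}" for t
      using W[OF that] by (simp add: carrier_iff)
    then show ?thesis
      unfolding coord_int_def if_not_P[OF False] by (rule has_integral_cong[THEN iffD2, OF _ has_integral_0])
  qed (rule C)
  have "((\<lambda>t. \<Psi> (\<gamma> t) k * ?D 1 t + (elt n a \<otimes> (\<lambda>s. \<Psi> (\<gamma> t) s * ?D 2 t)) k
      + (elt n b \<otimes> (\<lambda>s. \<Psi> (\<gamma> t) s * ?D 3 t)) k) has_integral alg_line_integral m n Ups u a b \<gamma> \<Psi> k)
      {0..1}"
    unfolding alg_line_integral_def mult_eq[symmetric]
    by (intro has_integral_add[OF has_integral_add[OF C1 mult_has_integral[OF C]] mult_has_integral[OF C]])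
  then show ?thesis
  proof (rule has_integral_cong[THEN iffD1, rotated])
    fix t :: real assume "t \<in> {0..1}"
    with W have "\<Psi> (\<gamma> t) \<otimes> elt n c = elt n c \<otimes> \<Psi> (\<gamma> t)" for c
      by (intro m_comm) auto
    with W \<open>t \<in> {0..1}\<close> show "\<Psi> (\<gamma> t) k * ?D 1 t + (elt n a \<otimes> (\<lambda>s. \<Psi> (\<gamma> t) s * ?D 2 t)) k
        + (elt n b \<otimes> (\<lambda>s. \<Psi> (\<gamma> t) s * ?D 3 t)) k = (\<Psi> (\<gamma> t) \<otimes> zeta3 m n a b (\<gamma>' t)) k"
      by (simp add: zeta3_eq mult_add_right mult_scale_right)
  qed
qed

lemma admissible_circle_integral:
  assumes adm: "admissible_circle m n a b \<rho> p q"
  shows "alg_line_integral m n Ups u a b (circ \<rho> p q) (\<lambda>P. A_inv m n Ups u (zeta3 m n a b P))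
    = (\<lambda>k. 2 * of_real pi * \<i> * A_one m k)"
proof
  fix k
  let ?X = "\<lambda>t. zeta3 m n a b (circ \<rho> p q t)" and ?X' = "\<lambda>t. zeta3 m n a b (circ_velocity \<rho> p q t)"
  have deriv: "(?X has_coord_derivative ?X' t) (at t within S)" for t S
    by (intro zeta3_has_coord_derivative circ_coord_has_real_derivative)
  have cont: "continuous_on {0..1} (\<lambda>t. ?X t k)" for k
    by (rule continuous_on_vector_derivative) (use deriv in \<open>auto simp: has_coord_derivative_def\<close>)
  have nz: "?X t k \<noteq> 0" if "t \<in> {0..1}" "k \<in> {1..m}" for t k
    using admissible_circle_nonzero[OF adm that(2,1)] .
  have "((\<lambda>t. (A_inv m n Ups u (?X t) \<otimes> ?X' t) k) has_integral 2 * pi * \<i> * \<one> k) {0..1}"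
    by (rule A_inv_mult_derivative_has_integral)
      (use deriv nz admissible_circle_winding[OF adm] in \<open>simp_all add: circ_def\<close>)
  moreover have "((\<lambda>t. (A_inv m n Ups u (?X t) \<otimes> ?X' t) k) has_integral
      alg_line_integral m n Ups u a b (circ \<rho> p q) (\<lambda>P. A_inv m n Ups u (zeta3 m n a b P)) k) {0..1}"
  proof (rule alg_line_integral_has_integral)
    show "A_inv m n Ups u (?X t) \<in> carrier R" if "t \<in> {0..1}" for t
      using A_inv_eq[OF zeta3_closed nz[OF that]] by (simp add: nil_factor_def)
    show "(\<lambda>t. A_inv m n Ups u (?X t) k * of_real (circ_velocity \<rho> p q t $ i)) integrable_on {0..1}"
      for k i
      by (intro integrable_continuous_interval continuous_intros continuous_on_A_inv cont nz)
        (auto simp: circ_velocity_def intro!: continuous_intros)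
  qed (rule vector_derivative_circ_coord)
  ultimately show "alg_line_integral m n Ups u a b (circ \<rho> p q) (\<lambda>P. A_inv m n Ups u (zeta3 m n a b P)) k
      = 2 * of_real pi * \<i> * A_one m k"
    by (simp add: one_eq has_integral_unique)
qed

end

theorem theorem10:
  fixes m n :: nat and Ups :: "nat \<Rightarrow> nat \<Rightarrow> nat \<Rightarrow> complex" and u :: "nat \<Rightarrow> nat"
    and a b :: "nat \<Rightarrow> complex"
  assumes alg: "is_Anm m n Ups u"
    and std: "standing_assms m n a b"
    and dimN: "n - m = 4"
    and h1: "a (m+1) = 0 \<and> b (m+1) = 0"
    and h2: "(a (m+2) = 0 \<and> b (m+2) = 0) \<or> (a (m+3) = 0 \<and> b (m+3) = 0)"
  shows "\<forall>R p q. admissible_circle m n a b R p q \<longrightarrow>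
           alg_line_integral m n Ups u a b (circ R p q)
              (\<lambda>P. A_inv m n Ups u (zeta3 m n a b P))
           = (\<lambda>k. 2 * of_real pi * \<i> * A_one m k)"
proof -
  interpret Anm_algebra "Anm_ring m n Ups u" m n Ups u
    using cring_Anm_ring[OF alg] alg by (simp add: Anm_algebra_def Anm_algebra_axioms_def)
  show ?thesis by (blast intro: admissible_circle_integral)
qed

end
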